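(* Assume $|J|=1$, the travel times $\tau$ have a convex potential $\Phi$, and all externality factors $g_{i,p}$ are constant. Then for every $0\le\lambda_1<\lambda_2$ and all $x_1\in\mathrm{WE}(\lambda_1)$, $x_2\in\mathrm{WE}(\lambda_2)$, it holds that $G(x_1)\ge G(x_2)$ and $\Phi(x_1)\le\Phi(x_2)$.
   Context: Let $G=(V,E)$ be a directed graph and $I$ a finite set of commodities; commodity $i$ has source $s_i$, sink $t_i$, demand $d_i>0$; $\mathcal P_i$ is its set of simple $s_i$–$t_i$ paths, $\mathcal P=\{(i,p)\}$. A flow $x\in\mathbb{R}^{\mathcal P}_{\ge0}$ is feasible if $\sum_{p\in\mathcal P_i}x_{i,p}=d_i$ for all $i$; $\mathcal F$ is the set of feasible flows. There is one externality class with constant factors $g_{i,p}\ge0$, $G(x)=\sum_{(i,p)}g_{i,p}x_{i,p}$. Travel times $\tau_{i,p}:\mathcal F\to\mathbb{R}$ have a potential: a differentiable $\Phi:\mathbb{R}^{\mathcal P}\to\mathbb{R}$ with $\tau_{i,p}(x)=\partial\Phi/\partial x_{i,p}(x)$ for $x\in\mathcal F$, assumed convex. For $\lambda\ge0$, $c^\lambda_{i,p}(x)=\tau_{i,p}(x)+\lambda g_{i,p}$, and $x\in\mathrm{WE}(\lambda)$ means $x\in\mathcal F$ and $x_{i,p}>0$ implies $c^\lambda_{i,p}(x)\le c^\lambda_{i,q}(x)$ for all $q\in\mathcal P_i$. *)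

theory Defs
  imports "HOL-Analysis.Analysis"
begin

definition simple_path :: "'v set \<Rightarrow> ('v \<times> 'v) set \<Rightarrow> 'v \<Rightarrow> 'v \<Rightarrow> 'v list \<Rightarrow> bool" where
  "simple_path V E s t p \<longleftrightarrow> p \<noteq> [] \<and> hd p = s \<and> last p = t \<and> distinct p \<and> set p \<subseteq> V \<and>
     (\<forall>k. Suc k < length p \<longrightarrow> (p ! k, p ! Suc k) \<in> E)"

definition paths :: "'v set \<Rightarrow> ('v \<times> 'v) set \<Rightarrow> 'v \<Rightarrow> 'v \<Rightarrow> 'v list set" where
  "paths V E s t = {p. simple_path V E s t p}"

definition Pset :: "'v set \<Rightarrow> ('v \<times> 'v) set \<Rightarrow> 'c set \<Rightarrow> ('c \<Rightarrow> 'v) \<Rightarrow> ('c \<Rightarrow> 'v) \<Rightarrow> ('c \<times> 'v list) set" where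
  "Pset V E I s t = {(i, p). i \<in> I \<and> p \<in> paths V E (s i) (t i)}"

definition vecs :: "'a set \<Rightarrow> ('a \<Rightarrow> real) set" where
  "vecs P = {x. \<forall>a. a \<notin> P \<longrightarrow> x a = 0}"

definition feasible :: "'v set \<Rightarrow> ('v \<times> 'v) set \<Rightarrow> 'c set \<Rightarrow> ('c \<Rightarrow> 'v) \<Rightarrow> ('c \<Rightarrow> 'v) \<Rightarrow> ('c \<Rightarrow> real)
     \<Rightarrow> (('c \<times> 'v list) \<Rightarrow> real) set" where
  "feasible V E I s t d = {x. x \<in> vecs (Pset V E I s t) \<and> (\<forall>a\<in>Pset V E I s t. 0 \<le> x a) \<and>
      (\<forall>i\<in>I. (\<Sum>p\<in>paths V E (s i) (t i). x (i, p)) = d i)}"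

(* Frechet differentiability on the finite-dimensional space vecs P (l1 norm),
   with gradient D (D a = partial derivative w.r.t. coordinate a). *)
definition has_gradient_on :: "'a set \<Rightarrow> (('a \<Rightarrow> real) \<Rightarrow> real) \<Rightarrow> ('a \<Rightarrow> real) \<Rightarrow> ('a \<Rightarrow> real) \<Rightarrow> bool" where
  "has_gradient_on P \<Phi> D x \<longleftrightarrow>
     (\<forall>e>0. \<exists>\<delta>>0. \<forall>h\<in>vecs P. (\<Sum>a\<in>P. \<bar>h a\<bar>) < \<delta> \<longrightarrow>
        \<bar>\<Phi> (\<lambda>a. x a + h a) - \<Phi> x - (\<Sum>a\<in>P. D a * h a)\<bar> \<le> e * (\<Sum>a\<in>P. \<bar>h a\<bar>))"

definition ext_total :: "'a set \<Rightarrow> ('a \<Rightarrow> real) \<Rightarrow> ('a \<Rightarrow> real) \<Rightarrow> real" where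
  "ext_total P g x = (\<Sum>a\<in>P. g a * x a)"

definition WE :: "'v set \<Rightarrow> ('v \<times> 'v) set \<Rightarrow> 'c set \<Rightarrow> ('c \<Rightarrow> 'v) \<Rightarrow> ('c \<Rightarrow> 'v) \<Rightarrow> ('c \<Rightarrow> real)
     \<Rightarrow> (('c \<times> 'v list) \<Rightarrow> (('c \<times> 'v list) \<Rightarrow> real) \<Rightarrow> real) \<Rightarrow> (('c \<times> 'v list) \<Rightarrow> real) \<Rightarrow> real
     \<Rightarrow> (('c \<times> 'v list) \<Rightarrow> real) set" where
  "WE V E I s t d \<tau> g lam = {x. x \<in> feasible V E I s t d \<and>
     (\<forall>i\<in>I. \<forall>p\<in>paths V E (s i) (t i). x (i, p) > 0 \<longrightarrow>
        (\<forall>q\<in>paths V E (s i) (t i). \<tau> (i, p) x + lam * g (i, p) \<le> \<tau> (i, q) x + lam * g (i, q)))}"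

definition convex_on_vecs :: "'a set \<Rightarrow> (('a \<Rightarrow> real) \<Rightarrow> real) \<Rightarrow> bool" where
  "convex_on_vecs P \<Phi> \<longleftrightarrow> (\<forall>x\<in>vecs P. \<forall>y\<in>vecs P. \<forall>u::real. 0 \<le> u \<and> u \<le> 1 \<longrightarrow>
      \<Phi> (\<lambda>a. (1 - u) * x a + u * y a) \<le> (1 - u) * \<Phi> x + u * \<Phi> y)"

end

theory Submission
  imports Defs
begin

text \<open>Both statements come from pairing two first-order inequalities for each equilibrium.
  Convexity of \<Phi> with gradient \<tau> gives \<open>\<Phi> x\<^sub>2 - \<Phi> x\<^sub>1 \<ge> \<langle>\<tau>(x\<^sub>1), x\<^sub>2 - x\<^sub>1\<rangle>\<close> and symmetrically;
  the Wardrop conditions are the variational inequalities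
  \<open>\<langle>\<tau>(x\<^sub>k) + \<lambda>\<^sub>k g, y - x\<^sub>k\<rangle> \<ge> 0\<close> for every feasible y. Adding all four yields
  \<open>(\<lambda>\<^sub>2 - \<lambda>\<^sub>1)(G(x\<^sub>2) - G(x\<^sub>1)) \<le> 0\<close>, hence \<open>G(x\<^sub>2) \<le> G(x\<^sub>1)\<close>; feeding this back into the
  inequalities at \<open>x\<^sub>1\<close> gives \<open>\<Phi>(x\<^sub>2) - \<Phi>(x\<^sub>1) \<ge> \<lambda>\<^sub>1 (G(x\<^sub>1) - G(x\<^sub>2)) \<ge> 0\<close>.\<close>

lemma finite_paths:
  assumes "finite V"
  shows "finite (paths V E s t)"
proof -
  have "paths V E s t \<subseteq> {xs. set xs \<subseteq> V \<and> length xs \<le> card V}"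
  proof
    fix p assume "p \<in> paths V E s t"
    then have p: "distinct p" "set p \<subseteq> V" by (auto simp: paths_def simple_path_def)
    have "length p = card (set p)" using distinct_card[OF p(1)] by simp
    also have "\<dots> \<le> card V" using card_mono[OF assms p(2)] .
    finally show "p \<in> {xs. set xs \<subseteq> V \<and> length xs \<le> card V}" using p by simp
  qed
  moreover have "finite {xs. set xs \<subseteq> V \<and> length xs \<le> card V}"
    by (rule finite_lists_length_le[OF assms])
  ultimately show ?thesis by (rule finite_subset)
qed

lemma Pset_Sigma: "Pset V E I s t = Sigma I (\<lambda>i. paths V E (s i) (t i))"
  by (auto simp: Pset_def)

lemma sum_Pset:
  assumes "finite V" "finite I"
  shows "(\<Sum>a\<in>Pset V E I s t. f a) = (\<Sum>i\<in>I. \<Sum>p\<in>paths V E (s i) (t i). f (i, p))"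
  unfolding Pset_Sigma using assms finite_paths by (subst sum.Sigma) auto

text \<open>Move from x towards y by a step u small enough for the gradient estimate at x;
  convexity bounds \<Phi> from above at that point.\<close>

lemma has_gradient_on_convex_le_eps:
  assumes x: "x \<in> vecs P" and y: "y \<in> vecs P"
    and cvx: "convex_on_vecs P \<Phi>" and grad: "has_gradient_on P \<Phi> D x" and "e > 0"
  shows "(\<Sum>a\<in>P. D a * (y a - x a)) \<le> \<Phi> y - \<Phi> x + e * (\<Sum>a\<in>P. \<bar>y a - x a\<bar>)"
proof -
  define h where "h a = y a - x a" for a
  define n where "n = (\<Sum>a\<in>P. \<bar>h a\<bar>)"
  define S where "S = (\<Sum>a\<in>P. D a * h a)"
  have "n \<ge> 0" unfolding n_def by (rule sum_nonneg) auto
  obtain \<delta> where "\<delta> > 0" and \<delta>: "\<And>k. k \<in> vecs P \<Longrightarrow> (\<Sum>a\<in>P. \<bar>k a\<bar>) < \<delta> \<Longrightarrow>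
      \<bar>\<Phi> (\<lambda>a. x a + k a) - \<Phi> x - (\<Sum>a\<in>P. D a * k a)\<bar> \<le> e * (\<Sum>a\<in>P. \<bar>k a\<bar>)"
    using grad \<open>e > 0\<close> unfolding has_gradient_on_def by blast
  define u where "u = min 1 (\<delta> / (n + 1))" \<comment> \<open>\<open>n + 1\<close> rather than \<open>n\<close>, which may vanish\<close>
  have "u > 0" "u \<le> 1" using \<open>\<delta> > 0\<close> \<open>n \<ge> 0\<close> by (auto simp: u_def)
  have "u * n < \<delta>"
  proof -
    have "u * n \<le> \<delta> / (n + 1) * n" using \<open>n \<ge> 0\<close> by (intro mult_right_mono) (auto simp: u_def)
    also have "\<dots> < \<delta>" using \<open>\<delta> > 0\<close> \<open>n \<ge> 0\<close> by (simp add: field_simps)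
    finally show ?thesis .
  qed
  define k where "k a = u * h a" for a
  have "k \<in> vecs P" using x y by (auto simp: vecs_def k_def h_def)
  moreover have "(\<Sum>a\<in>P. \<bar>k a\<bar>) = u * n"
    using \<open>u > 0\<close> by (simp add: k_def n_def abs_mult sum_distrib_left)
  moreover have "(\<Sum>a\<in>P. D a * k a) = u * S"
    by (simp add: k_def S_def sum_distrib_left algebra_simps)
  ultimately have "\<bar>\<Phi> (\<lambda>a. x a + k a) - \<Phi> x - u * S\<bar> \<le> e * (u * n)"
    using \<delta> \<open>u * n < \<delta>\<close> by metis
  then have lower: "\<Phi> x + u * S - e * (u * n) \<le> \<Phi> (\<lambda>a. x a + k a)"
    unfolding abs_le_iff by linarith
  have combination: "(\<lambda>a. (1 - u) * x a + u * y a) = (\<lambda>a. x a + k a)"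
    by (auto simp: k_def h_def algebra_simps)
  have "\<Phi> (\<lambda>a. (1 - u) * x a + u * y a) \<le> (1 - u) * \<Phi> x + u * \<Phi> y"
    using cvx x y \<open>u > 0\<close> \<open>u \<le> 1\<close> unfolding convex_on_vecs_def by simp
  then have upper: "\<Phi> (\<lambda>a. x a + k a) \<le> (1 - u) * \<Phi> x + u * \<Phi> y"
    unfolding combination .
  have "u * (\<Phi> y - \<Phi> x + e * n) = u * \<Phi> y - u * \<Phi> x + e * (u * n)"
    by (simp add: algebra_simps)
  then have "u * S \<le> u * (\<Phi> y - \<Phi> x + e * n)"
    using lower upper by (simp add: left_diff_distrib)
  then have "S \<le> \<Phi> y - \<Phi> x + e * n"
    using \<open>u > 0\<close> by simp
  then show ?thesis by (simp add: S_def n_def h_def)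
qed

lemma has_gradient_on_convex_le:
  assumes "x \<in> vecs P" and "y \<in> vecs P"
    and "convex_on_vecs P \<Phi>" and "has_gradient_on P \<Phi> D x"
  shows "\<Phi> x + (\<Sum>a\<in>P. D a * (y a - x a)) \<le> \<Phi> y"
proof -
  define n where "n = (\<Sum>a\<in>P. \<bar>y a - x a\<bar>)"
  have "n \<ge> 0" unfolding n_def by (rule sum_nonneg) auto
  have "(\<Sum>a\<in>P. D a * (y a - x a)) \<le> (\<Phi> y - \<Phi> x) + e" if "e > 0" for e
  proof -
    have "e / (n + 1) > 0" using \<open>e > 0\<close> \<open>n \<ge> 0\<close> by simp
    from has_gradient_on_convex_le_eps[OF assms this]
    have "(\<Sum>a\<in>P. D a * (y a - x a)) \<le> \<Phi> y - \<Phi> x + e / (n + 1) * n"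
      unfolding n_def .
    also have "e / (n + 1) * n \<le> e"
      using \<open>e > 0\<close> \<open>n \<ge> 0\<close> by (simp add: field_simps)
    finally show ?thesis by simp
  qed
  then have "(\<Sum>a\<in>P. D a * (y a - x a)) \<le> \<Phi> y - \<Phi> x" by (rule field_le_epsilon)
  then show ?thesis by simp
qed

lemma sum_mult_le_if_support_minimizes:
  fixes c x y :: "'a \<Rightarrow> real"
  assumes "finite Q" and "\<forall>p\<in>Q. 0 \<le> x p" and "\<forall>p\<in>Q. 0 \<le> y p" and "sum x Q = sum y Q"
    and min: "\<forall>p\<in>Q. x p > 0 \<longrightarrow> (\<forall>q\<in>Q. c p \<le> c q)"
  shows "(\<Sum>p\<in>Q. c p * x p) \<le> (\<Sum>p\<in>Q. c p * y p)"
proof (cases "\<exists>p\<in>Q. x p > 0")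
  case True
  then obtain p\<^sub>0 where "p\<^sub>0 \<in> Q" "x p\<^sub>0 > 0" by blast
  define m where "m = c p\<^sub>0"
  have m_le: "\<forall>q\<in>Q. m \<le> c q" using min \<open>p\<^sub>0 \<in> Q\<close> \<open>x p\<^sub>0 > 0\<close> by (simp add: m_def)
  have "(\<Sum>p\<in>Q. c p * x p) = (\<Sum>p\<in>Q. m * x p)"
  proof (rule sum.cong)
    fix p assume "p \<in> Q"
    show "c p * x p = m * x p"
    proof (cases "x p > 0")
      case True
      then have "c p \<le> m" using min \<open>p \<in> Q\<close> \<open>p\<^sub>0 \<in> Q\<close> by (auto simp: m_def)
      moreover have "m \<le> c p" using m_le \<open>p \<in> Q\<close> by blast
      ultimately show ?thesis by simp
    next
      case False
      then show ?thesis using assms(2) \<open>p \<in> Q\<close> by force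
    qed
  qed simp
  also have "\<dots> = (\<Sum>p\<in>Q. m * y p)" using assms(4) by (simp add: sum_distrib_left[symmetric])
  also have "\<dots> \<le> (\<Sum>p\<in>Q. c p * y p)"
    using m_le assms(3) by (intro sum_mono mult_right_mono) auto
  finally show ?thesis .
next
  case False
  then have "\<forall>p\<in>Q. x p = 0" using assms(2) by force
  then have "\<forall>p\<in>Q. y p = 0"
    using assms(1,3,4) sum_nonneg_eq_0_iff[of Q y] by simp
  then show ?thesis using \<open>\<forall>p\<in>Q. x p = 0\<close> by simp
qed

lemma WE_variational_inequality:
  assumes "finite V" and "finite I"
    and x: "x \<in> WE V E I s t d \<tau> g lam" and y: "y \<in> feasible V E I s t d"
  shows "0 \<le> (\<Sum>a\<in>Pset V E I s t. \<tau> a x * (y a - x a))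
            + lam * (ext_total (Pset V E I s t) g y - ext_total (Pset V E I s t) g x)"
proof -
  define c where "c a = \<tau> a x + lam * g a" for a
  have per_commodity: "(\<Sum>p\<in>paths V E (s i) (t i). c (i, p) * x (i, p))
      \<le> (\<Sum>p\<in>paths V E (s i) (t i). c (i, p) * y (i, p))" if "i \<in> I" for i
    using x y \<open>i \<in> I\<close> finite_paths[OF \<open>finite V\<close>]
    by (intro sum_mult_le_if_support_minimizes[where x = "\<lambda>p. x (i, p)" and y = "\<lambda>p. y (i, p)"])
       (auto simp: WE_def feasible_def Pset_def c_def)
  have "(\<Sum>a\<in>Pset V E I s t. c a * x a) \<le> (\<Sum>a\<in>Pset V E I s t. c a * y a)"
    unfolding sum_Pset[OF assms(1,2)] using per_commodity by (rule sum_mono)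
  moreover have "(\<Sum>a\<in>Pset V E I s t. c a * y a) - (\<Sum>a\<in>Pset V E I s t. c a * x a)
      = (\<Sum>a\<in>Pset V E I s t. \<tau> a x * (y a - x a))
        + lam * (ext_total (Pset V E I s t) g y - ext_total (Pset V E I s t) g x)"
    by (simp add: c_def ext_total_def sum_subtractf[symmetric] sum_distrib_left
        sum.distrib[symmetric] algebra_simps)
  ultimately show ?thesis by linarith
qed

theorem lemma4p6:
  fixes V :: "'v set" and E :: "('v \<times> 'v) set" and I :: "'c set"
    and s t :: "'c \<Rightarrow> 'v" and d :: "'c \<Rightarrow> real"
    and g :: "('c \<times> 'v list) \<Rightarrow> real"
    and \<tau> :: "('c \<times> 'v list) \<Rightarrow> (('c \<times> 'v list) \<Rightarrow> real) \<Rightarrow> real"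
    and \<Phi> :: "(('c \<times> 'v list) \<Rightarrow> real) \<Rightarrow> real"
    and lam1 lam2 :: real and x1 x2 :: "('c \<times> 'v list) \<Rightarrow> real"
  assumes "finite V" and "E \<subseteq> V \<times> V" and "finite I"
    and "\<forall>i\<in>I. s i \<in> V \<and> t i \<in> V" and "\<forall>i\<in>I. d i > 0"
    and "\<forall>a\<in>Pset V E I s t. g a \<ge> 0"
    and "\<forall>x\<in>vecs (Pset V E I s t). \<exists>D. has_gradient_on (Pset V E I s t) \<Phi> D x"
    and "\<forall>x\<in>feasible V E I s t d. has_gradient_on (Pset V E I s t) \<Phi> (\<lambda>a. \<tau> a x) x"
    and "convex_on_vecs (Pset V E I s t) \<Phi>"
    and "0 \<le> lam1" and "lam1 < lam2"
    and "x1 \<in> WE V E I s t d \<tau> g lam1" and "x2 \<in> WE V E I s t d \<tau> g lam2"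
  shows "ext_total (Pset V E I s t) g x1 \<ge> ext_total (Pset V E I s t) g x2
       \<and> \<Phi> x1 \<le> \<Phi> x2"
proof -
  define P where "P = Pset V E I s t"
  define \<Delta>G where "\<Delta>G = ext_total P g x2 - ext_total P g x1"
  define A where "A = (\<Sum>a\<in>P. \<tau> a x1 * (x2 a - x1 a))"
  define B where "B = (\<Sum>a\<in>P. \<tau> a x2 * (x1 a - x2 a))"
  have feas: "x1 \<in> feasible V E I s t d" "x2 \<in> feasible V E I s t d"
    using assms(12,13) by (auto simp: WE_def)
  have vecs: "x1 \<in> vecs P" "x2 \<in> vecs P" using feas by (auto simp: feasible_def P_def)
  have convex1: "\<Phi> x1 + A \<le> \<Phi> x2"
    using has_gradient_on_convex_le[OF vecs(1,2)] assms(8,9) feas(1)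
    unfolding A_def P_def by blast
  have convex2: "\<Phi> x2 + B \<le> \<Phi> x1"
    using has_gradient_on_convex_le[OF vecs(2,1)] assms(8,9) feas(2)
    unfolding B_def P_def by blast
  have VI1: "0 \<le> A + lam1 * \<Delta>G"
    using WE_variational_inequality[OF assms(1,3,12) feas(2)] unfolding A_def \<Delta>G_def P_def .
  have VI2: "0 \<le> B - lam2 * \<Delta>G"
    using WE_variational_inequality[OF assms(1,3,13) feas(1)]
    unfolding B_def \<Delta>G_def P_def by (simp add: right_diff_distrib)
  have "0 \<le> (lam1 - lam2) * \<Delta>G" using convex1 convex2 VI1 VI2 by (simp add: algebra_simps)
  then have "\<Delta>G \<le> 0" using \<open>lam1 < lam2\<close> by (simp add: zero_le_mult_iff)
  then have "\<Phi> x1 \<le> \<Phi> x2"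
    using convex1 VI1 \<open>0 \<le> lam1\<close> mult_nonneg_nonpos[of lam1 \<Delta>G] by linarith
  then show ?thesis using \<open>\<Delta>G \<le> 0\<close> by (simp add: \<Delta>G_def P_def)
qed

end
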